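(* Let $n\ge2$ and let $M'\subset\mathbb{C}^{n+1}$ be a real-analytic or smooth real hypersurface through $0$ defined near $0$ by $$\rho(W,\bar W)=-\mathrm{Im}\,w_{n+1}+\sum_{j=1}^{n-1}|w_j|^2+\phi(W,\bar W),\qquad \phi=O(|W|^3),$$ $W=(w_1,\dots,w_{n+1})$. For $1\le k\le n$ let $$\Lambda_k=2i\Big(\frac{\partial\rho}{\partial\bar w_{n+1}}\frac{\partial}{\partial\bar w_k}-\frac{\partial\rho}{\partial\bar w_k}\frac{\partial}{\partial\bar w_{n+1}}\Big),$$ let $\rho_W=(\partial\rho/\partial w_1,\dots,\partial\rho/\partial w_{n+1})$, and for $1\le i_1\le\dots\le i_l\le n$ let $\Delta_{i_1\dots i_l}(q)$ be the determinant of the $(n+1)\times(n+1)$ matrix whose rows are $\rho_W,\Lambda_1\rho_W,\dots,\Lambda_{n-1}\rho_W,\Lambda_{i_1}\cdots\Lambda_{i_l}\rho_W$, evaluated at $q\in M'$. Assume $M'$ is $l$-nondegenerate at $0$ for some $l\ge2$. Then there exist $1\le i_1\le\dots\le i_l\le n$ such that $\Delta_{i_1\dots i_l}(0)\ne0$.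
   Context: The $\Lambda_k$, $1\le k\le n$, form a local basis of CR vector fields of $M'$. For $E_l(p)=\mathrm{Span}_{\mathbb{C}}\{\Lambda^\alpha\rho_W(p):0\le|\alpha|\le l\}$ with $\Lambda^\alpha=\Lambda_1^{\alpha_1}\cdots\Lambda_n^{\alpha_n}$, $M'$ is $k$-nondegenerate at $p$ if $E_{k-1}(p)\ne E_k(p)=\mathbb{C}^{n+1}$. *)

theory Defs
  imports Complex_Main "HOL-Analysis.Derivative" "Jordan_Normal_Form.Determinant"
begin

text \<open>Points of C^(n+1) are modelled as functions W :: nat => complex, where only the
coordinates 1..n+1 are used; the space C^(n+1) itself is the slice of functions vanishing
outside {1..n+1}.\<close>

definition cslice :: "nat \<Rightarrow> (nat \<Rightarrow> complex) set" where
  "cslice n = {W. \<forall>j. j \<notin> {1..n+1} \<longrightarrow> W j = 0}"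

definition cnorm :: "nat \<Rightarrow> (nat \<Rightarrow> complex) \<Rightarrow> real" where
  "cnorm n W = sqrt (\<Sum>j=1..n+1. (cmod (W j))^2)"

text \<open>Real directions: (j, False) is the direction of Re w_j, (j, True) of Im w_j.\<close>

definition dirs :: "nat \<Rightarrow> (nat \<times> bool) set" where
  "dirs n = {1..n+1} \<times> UNIV"

definition line :: "nat \<times> bool \<Rightarrow> (nat \<Rightarrow> complex) \<Rightarrow> real \<Rightarrow> (nat \<Rightarrow> complex)" where
  "line d W t = W(fst d := W (fst d) + (if snd d then \<i> else 1) * complex_of_real t)"

definition pdir :: "nat \<times> bool \<Rightarrow> ((nat \<Rightarrow> complex) \<Rightarrow> complex) \<Rightarrow> (nat \<Rightarrow> complex) \<Rightarrow> complex" where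
  "pdir d f W = vector_derivative (\<lambda>t::real. f (line d W t)) (at 0)"

fun pdirs :: "(nat \<times> bool) list \<Rightarrow> ((nat \<Rightarrow> complex) \<Rightarrow> complex) \<Rightarrow> (nat \<Rightarrow> complex) \<Rightarrow> complex" where
  "pdirs [] f = f"
| "pdirs (d # ds) f = pdir d (pdirs ds f)"

definition cont_slice :: "nat \<Rightarrow> ((nat \<Rightarrow> complex) \<Rightarrow> complex) \<Rightarrow> (nat \<Rightarrow> complex) \<Rightarrow> bool" where
  "cont_slice n g W \<longleftrightarrow> (\<forall>\<epsilon>>0. \<exists>\<eta>>0. \<forall>V\<in>cslice n.
      cnorm n (\<lambda>j. V j - W j) < \<eta> \<longrightarrow> cmod (g V - g W) < \<epsilon>)"

definition smooth_near0 :: "nat \<Rightarrow> ((nat \<Rightarrow> complex) \<Rightarrow> complex) \<Rightarrow> bool" where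
  "smooth_near0 n f \<longleftrightarrow> (\<exists>\<delta>>0. \<forall>ds. set ds \<subseteq> dirs n \<longrightarrow>
      (\<forall>W\<in>cslice n. cnorm n W < \<delta> \<longrightarrow>
         (\<forall>d\<in>dirs n. (\<lambda>t::real. pdirs ds f (line d W t)) differentiable (at 0))
         \<and> cont_slice n (pdirs ds f) W))"

definition dw :: "((nat \<Rightarrow> complex) \<Rightarrow> complex) \<Rightarrow> nat \<Rightarrow> (nat \<Rightarrow> complex) \<Rightarrow> complex" where
  "dw f j W = (pdir (j, False) f W - \<i> * pdir (j, True) f W) / 2"

definition dwb :: "((nat \<Rightarrow> complex) \<Rightarrow> complex) \<Rightarrow> nat \<Rightarrow> (nat \<Rightarrow> complex) \<Rightarrow> complex" where
  "dwb f j W = (pdir (j, False) f W + \<i> * pdir (j, True) f W) / 2"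

definition Lam :: "nat \<Rightarrow> ((nat \<Rightarrow> complex) \<Rightarrow> complex) \<Rightarrow> nat
     \<Rightarrow> ((nat \<Rightarrow> complex) \<Rightarrow> complex) \<Rightarrow> (nat \<Rightarrow> complex) \<Rightarrow> complex" where
  "Lam n r k g W = 2 * \<i> * (dwb r (n+1) W * dwb g k W - dwb r k W * dwb g (n+1) W)"

fun Lams :: "nat \<Rightarrow> ((nat \<Rightarrow> complex) \<Rightarrow> complex) \<Rightarrow> nat list
     \<Rightarrow> ((nat \<Rightarrow> complex) \<Rightarrow> complex) \<Rightarrow> (nat \<Rightarrow> complex) \<Rightarrow> complex" where
  "Lams n r [] g = g"
| "Lams n r (i # is) g = Lam n r i (Lams n r is g)"

definition LrhoW :: "nat \<Rightarrow> ((nat \<Rightarrow> complex) \<Rightarrow> complex) \<Rightarrow> nat list \<Rightarrow> (nat \<Rightarrow> complex) \<Rightarrow> (nat \<Rightarrow> complex)" where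
  "LrhoW n r is p = (\<lambda>m. if m \<in> {1..n+1} then Lams n r is (dw r m) p else 0)"

definition cspan :: "(nat \<Rightarrow> complex) set \<Rightarrow> (nat \<Rightarrow> complex) set" where
  "cspan S = {v. \<exists>F c. finite F \<and> F \<subseteq> S \<and> v = (\<lambda>j. \<Sum>u\<in>F. c u * u j)}"

text \<open>E_l(p): multi-indices alpha with |alpha| <= l correspond to sorted lists in {1..n}
of length <= l (Lambda^alpha = Lambda_1^alpha_1 ... Lambda_n^alpha_n).\<close>

definition Espace :: "nat \<Rightarrow> ((nat \<Rightarrow> complex) \<Rightarrow> complex) \<Rightarrow> nat \<Rightarrow> (nat \<Rightarrow> complex) \<Rightarrow> (nat \<Rightarrow> complex) set" where
  "Espace n r l p = cspan {LrhoW n r is p | is. sorted is \<and> set is \<subseteq> {1..n} \<and> length is \<le> l}"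

definition k_nondegenerate :: "nat \<Rightarrow> ((nat \<Rightarrow> complex) \<Rightarrow> complex) \<Rightarrow> nat \<Rightarrow> (nat \<Rightarrow> complex) \<Rightarrow> bool" where
  "k_nondegenerate n r k p \<longleftrightarrow> Espace n r (k - 1) p \<noteq> Espace n r k p \<and> Espace n r k p = cslice n"

definition Delta :: "nat \<Rightarrow> ((nat \<Rightarrow> complex) \<Rightarrow> complex) \<Rightarrow> nat list \<Rightarrow> (nat \<Rightarrow> complex) \<Rightarrow> complex" where
  "Delta n r is q = det (mat (n+1) (n+1) (\<lambda>(a, b).
      if a = 0 then LrhoW n r [] q (b+1)
      else if a < n then LrhoW n r [a] q (b+1)
      else LrhoW n r is q (b+1)))"

end

theory Submission
  imports Defs
begin

text \<open>Up to order two the defining function agrees at the origin with the quadric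
  \<open>-Im w\<^sub>n\<^sub>+\<^sub>1 + \<Sum>\<^sub>j\<^sub><\<^sub>n |w\<^sub>j|\<^sup>2\<close>: the first real partials follow from the cubic bound on
  \<open>\<phi>\<close>, and the second partials from the mixed second difference of \<open>\<rho>\<close> along a coordinate plane,
  using the mean value theorem twice and the continuity of the second partials. Hence
  \<open>\<rho>\<^sub>W(0) = (i/2) e\<^sub>n\<^sub>+\<^sub>1\<close> and \<open>\<Lambda>\<^sub>a \<rho>\<^sub>W(0) = e\<^sub>a\<close> for \<open>a < n\<close>.
  Since \<open>e\<^sub>n \<in> E\<^sub>l(0)\<close>, some generator \<open>\<Lambda>\<^sup>\<alpha> \<rho>\<^sub>W(0)\<close> with \<open>|\<alpha>| \<le> l\<close> has nonzero \<open>n\<close>-th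
  coordinate, and \<open>|\<alpha>| < l\<close> is impossible because together with \<open>\<rho>\<^sub>W(0)\<close> and the \<open>\<Lambda>\<^sub>a \<rho>\<^sub>W(0)\<close>
  it would make \<open>E\<^sub>l\<^sub>-\<^sub>1(0)\<close> all of \<open>\<complex>\<^sup>n\<^sup>+\<^sup>1\<close>. With this generator as last row the
  matrix of \<open>\<Delta>\<^sub>\<alpha>(0)\<close> has trivial kernel.\<close>

lemma cspan_superset: "u \<in> S \<Longrightarrow> u \<in> cspan S"
  unfolding cspan_def by (intro CollectI exI[of _ "{u}"] exI[of _ "\<lambda>_. 1"]) auto

lemma cspan_zero: "(\<lambda>_. 0) \<in> cspan S"
  unfolding cspan_def by (intro CollectI exI[of _ "{}"]) auto

lemma cspan_add:
  assumes "v \<in> cspan S" "w \<in> cspan S"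
  shows "(\<lambda>j. v j + w j) \<in> cspan S"
proof -
  obtain F1 c1 where 1: "finite F1" "F1 \<subseteq> S" "v = (\<lambda>j. \<Sum>u\<in>F1. c1 u * u j)"
    using assms(1) unfolding cspan_def by blast
  obtain F2 c2 where 2: "finite F2" "F2 \<subseteq> S" "w = (\<lambda>j. \<Sum>u\<in>F2. c2 u * u j)"
    using assms(2) unfolding cspan_def by blast
  define c where "c u = (if u \<in> F1 then c1 u else 0) + (if u \<in> F2 then c2 u else 0)" for u
  have "(\<lambda>j. v j + w j) = (\<lambda>j. \<Sum>u\<in>F1 \<union> F2. c u * u j)"
  proof
    fix j
    have "(\<Sum>u\<in>F1 \<union> F2. (if u \<in> F1 then c1 u else 0) * u j) = (\<Sum>u\<in>F1. c1 u * u j)"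
         "(\<Sum>u\<in>F1 \<union> F2. (if u \<in> F2 then c2 u else 0) * u j) = (\<Sum>u\<in>F2. c2 u * u j)"
      by (rule sum.mono_neutral_cong_right; use 1 2 in auto)+
    then show "v j + w j = (\<Sum>u\<in>F1 \<union> F2. c u * u j)"
      unfolding c_def distrib_right sum.distrib using 1 2 by simp
  qed
  with 1 2 show ?thesis
    unfolding cspan_def by (intro CollectI exI[of _ "F1 \<union> F2"] exI[of _ c]) simp
qed

lemma cspan_scale:
  assumes "v \<in> cspan S"
  shows "(\<lambda>j. a * v j) \<in> cspan S"
proof -
  obtain F c where "finite F" "F \<subseteq> S" "v = (\<lambda>j. \<Sum>u\<in>F. c u * u j)"
    using assms unfolding cspan_def by blast
  then show ?thesis
    unfolding cspan_def
    by (intro CollectI exI[of _ F] exI[of _ "\<lambda>u. a * c u"]) (auto simp: sum_distrib_left mult.assoc)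
qed

lemma cspan_sum:
  assumes "finite I" "\<And>i. i \<in> I \<Longrightarrow> g i \<in> cspan S"
  shows "(\<lambda>j. \<Sum>i\<in>I. f i * g i j) \<in> cspan S"
  using assms
proof (induction I rule: finite_induct)
  case empty
  then show ?case using cspan_zero by simp
next
  case (insert x F)
  have "(\<lambda>j. f x * g x j + (\<Sum>i\<in>F. f i * g i j)) \<in> cspan S"
    by (rule cspan_add[OF cspan_scale]) (use insert in auto)
  then show ?case using insert by simp
qed

lemma cspan_mono: "S \<subseteq> T \<Longrightarrow> cspan S \<subseteq> cspan T"
  unfolding cspan_def by blast

lemma cspan_coordinate_eq_0:
  assumes "v \<in> cspan S" "\<And>u. u \<in> S \<Longrightarrow> u j = 0"
  shows "v j = 0"
  using assms unfolding cspan_def by (auto intro!: sum.neutral)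

lemma cslice_subset_cspan:
  assumes u: "u \<in> cspan S" "u = (\<lambda>m. if m = n+1 then c else 0)" "c \<noteq> 0"
    and units: "\<And>a. a \<in> {1..n-1} \<Longrightarrow> (\<lambda>m. if m = a then 1 else 0) \<in> cspan S"
    and v: "v \<in> cspan S" "v \<in> cslice n" "v n \<noteq> 0"
  shows "cslice n \<subseteq> cspan S"
proof
  fix W assume W: "W \<in> cslice n"
  define t where "t = W n / v n"
  define w where "w j = W j - t * v j" for j
  have "W = (\<lambda>j. (t * v j + (\<Sum>a\<in>{1..n-1}. w a * (if j = a then 1 else 0))) + (w (n+1) / c) * u j)"
  proof
    fix j
    have units_sum: "(\<Sum>a\<in>{1..n-1}. w a * (if j = a then 1 else 0)) = (if j \<in> {1..n-1} then w j else 0)"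
      by (simp add: if_distrib[of "(*) _"] cong: if_cong)
    consider "j \<in> {1..n-1}" | "j = n" | "j = n+1" | "j \<notin> {1..n+1}"
      by fastforce
    then show "W j = (t * v j + (\<Sum>a\<in>{1..n-1}. w a * (if j = a then 1 else 0))) + (w (n+1) / c) * u j"
      using W v u unfolding units_sum by cases (auto simp: w_def t_def cslice_def)
  qed
  also have "\<dots> \<in> cspan S"
    by (intro cspan_add cspan_scale cspan_sum units v u) auto
  finally show "W \<in> cspan S" .
qed

lemma det_ne_0_if_unit_rows:
  fixes M :: "'a::idom mat"
  assumes M: "M \<in> carrier_mat (n+1) (n+1)"
    and row_0: "\<And>b. b \<le> n \<Longrightarrow> M $$ (0, b) = (if b = n then c else 0)" "c \<noteq> 0"
    and unit_rows: "\<And>a b. a \<in> {1..n-1} \<Longrightarrow> b \<le> n \<Longrightarrow> M $$ (a, b) = (if b = a - 1 then 1 else 0)"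
    and row_n: "n \<ge> 1" "M $$ (n, n-1) \<noteq> 0"
  shows "det M \<noteq> 0"
proof
  assume "det M = 0"
  then obtain x where x: "x \<in> carrier_vec (n+1)" "x \<noteq> 0\<^sub>v (n+1)" "M *\<^sub>v x = 0\<^sub>v (n+1)"
    using det_0_iff_vec_prod_zero[OF M] by blast
  have row_eq: "(\<Sum>b\<le>n. M $$ (a, b) * x $ b) = 0" if "a \<le> n" for a
  proof -
    have "(M *\<^sub>v x) $ a = 0" using x(3) that by simp
    then show ?thesis
      using that M x(1) by (simp add: scalar_prod_def atLeast0LessThan lessThan_Suc_atMost)
  qed
  have x_n: "x $ n = 0"
    using row_eq[of 0] row_0 by (simp add: if_distrib[of "\<lambda>y. y * _"] cong: if_cong)
  have x_low: "x $ b = 0" if "b < n - 1" for b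
    using row_eq[of "b+1"] unit_rows[of "b+1"] that
    by (simp add: if_distrib[of "\<lambda>y. y * _"] cong: if_cong)
  have "(\<Sum>b\<le>n. M $$ (n, b) * x $ b) = (\<Sum>b\<le>n. if b = n - 1 then M $$ (n, n-1) * x $ (n-1) else 0)"
  proof (rule sum.cong)
    fix b assume "b \<in> {..n}"
    then consider "b < n - 1" | "b = n - 1" | "b = n" by fastforce
    then show "M $$ (n, b) * x $ b = (if b = n - 1 then M $$ (n, n-1) * x $ (n-1) else 0)"
      by cases (use x_n x_low in auto)
  qed simp
  then have x_pen: "x $ (n-1) = 0"
    using row_eq[of n] row_n by simp
  have "x $ b = 0" if "b \<le> n" for b
  proof -
    from that consider "b < n - 1" | "b = n - 1" | "b = n" by fastforce
    then show ?thesis by cases (use x_n x_low x_pen in auto)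
  qed
  then have "x = 0\<^sub>v (n+1)"
    by (intro eq_vecI) (use x(1) in auto)
  with x(2) show False ..
qed

text \<open>Column \<open>b\<close> of the matrix in \<open>Delta\<close> holds coordinate \<open>b + 1\<close>, so the row
  \<open>\<Lambda>\<^sub>a \<rho>\<^sub>W = e\<^sub>a\<close> has its entry \<open>1\<close> in column \<open>a - 1\<close>.\<close>

lemma Delta_ne_0_if_nondegenerate:
  assumes "n \<ge> 1" "l \<ge> 2" and nondeg: "k_nondegenerate n r l p"
    and rho_W: "LrhoW n r [] p = (\<lambda>m. if m = n+1 then c else 0)" "c \<noteq> 0"
    and Lam_rho_W: "\<And>a. a \<in> {1..n-1} \<Longrightarrow> LrhoW n r [a] p = (\<lambda>m. if m = a then 1 else 0)"
  shows "\<exists>is. length is = l \<and> sorted is \<and> set is \<subseteq> {1..n} \<and> Delta n r is p \<noteq> 0"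
proof -
  define gens where "gens L = {LrhoW n r is p | is. sorted is \<and> set is \<subseteq> {1..n} \<and> length is \<le> L}" for L
  have E: "Espace n r L p = cspan (gens L)" for L
    unfolding Espace_def gens_def ..
  have full: "cspan (gens l) = cslice n" and proper: "cspan (gens (l-1)) \<noteq> cspan (gens l)"
    using nondeg unfolding k_nondegenerate_def E by auto
  have "(\<lambda>j. if j = n then 1 else 0) \<in> cspan (gens l)"
    using full \<open>n \<ge> 1\<close> by (auto simp: cslice_def)
  then obtain "is" where "is": "sorted is" "set is \<subseteq> {1..n}" "length is \<le> l" and v_n: "LrhoW n r is p n \<noteq> 0"
    using cspan_coordinate_eq_0[of _ "gens l" n] unfolding gens_def by force
  have "length is = l"
  proof (rule ccontr)
    assume "length is \<noteq> l"
    then have "LrhoW n r is p \<in> gens (l-1)"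
      using "is" unfolding gens_def by force
    moreover have "LrhoW n r [] p \<in> gens (l-1)"
      unfolding gens_def by force
    moreover have "LrhoW n r [a] p \<in> gens (l-1)" if "a \<in> {1..n-1}" for a
      using that \<open>l \<ge> 2\<close> unfolding gens_def by force
    moreover have "LrhoW n r is p \<in> cslice n"
      by (simp add: cslice_def LrhoW_def)
    ultimately have "cslice n \<subseteq> cspan (gens (l-1))"
      using Lam_rho_W
      by (intro cslice_subset_cspan[where u = "LrhoW n r [] p" and v = "LrhoW n r is p", OF _ rho_W _ _ _ v_n])
        (auto intro: cspan_superset)
    moreover have "cspan (gens (l-1)) \<subseteq> cspan (gens l)"
      by (rule cspan_mono) (auto simp: gens_def)
    ultimately show False
      using full proper by blast
  qed
  moreover have "Delta n r is p \<noteq> 0"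
    unfolding Delta_def using \<open>n \<ge> 1\<close> v_n rho_W Lam_rho_W
    by (intro det_ne_0_if_unit_rows[where c = c]) auto
  ultimately show ?thesis
    using "is" by blast
qed

lemma vector_derivative_eqI_quadratic_remainder:
  fixes h :: "real \<Rightarrow> complex"
  assumes "e > 0" and remainder: "\<And>t. \<bar>t\<bar> < e \<Longrightarrow> cmod (h t - h 0 - of_real t * D) \<le> K * t\<^sup>2"
  shows "vector_derivative h (at 0) = D"
proof -
  have "((\<lambda>t. cmod (h t - h 0 - t *\<^sub>R D) / \<bar>t\<bar>) \<longlongrightarrow> 0) (at 0)"
  proof (rule Lim_null_comparison)
    have "cmod (h t - h 0 - t *\<^sub>R D) / \<bar>t\<bar> \<le> \<bar>K\<bar> * \<bar>t\<bar>" if "t \<noteq> 0" "\<bar>t\<bar> < e" for t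
    proof -
      have "cmod (h t - h 0 - t *\<^sub>R D) \<le> (\<bar>K\<bar> * \<bar>t\<bar>) * \<bar>t\<bar>"
        using remainder[OF that(2)] abs_ge_self[of K]
        by (simp add: scaleR_conv_of_real power2_eq_square mult.assoc)
           (metis abs_mult_self_eq mult_right_mono order_trans zero_le_mult_iff abs_ge_zero)
      then show ?thesis
        using that(1) by (simp add: divide_le_eq)
    qed
    then show "\<forall>\<^sub>F t in at 0. norm (cmod (h t - h 0 - t *\<^sub>R D) / \<bar>t\<bar>) \<le> \<bar>K\<bar> * \<bar>t\<bar>"
      unfolding eventually_at using \<open>e > 0\<close> by (intro exI[of _ e]) auto
    show "((\<lambda>t. \<bar>K\<bar> * \<bar>t\<bar>) \<longlongrightarrow> 0) (at (0::real))"
      by (auto intro!: tendsto_eq_intros)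
  qed
  then have "(h has_vector_derivative D) (at 0)"
    unfolding has_vector_derivative_def has_derivative_iff_norm
    by (simp add: bounded_linear_scaleR_left)
  then show ?thesis
    by (rule vector_derivative_at)
qed

lemma Im_vector_derivative_eq_0:
  fixes f :: "real \<Rightarrow> complex"
  assumes "f differentiable (at 0)" "e > 0" "\<And>t. \<bar>t\<bar> < e \<Longrightarrow> Im (f t) = 0"
  shows "Im (vector_derivative f (at 0)) = 0"
proof -
  have "((\<lambda>t. Im (f t)) has_real_derivative Im (vector_derivative f (at 0))) (at 0)"
    using assms(1) by (intro has_field_derivative_Im) (simp add: vector_derivative_works)
  then have "((\<lambda>t. 0) has_real_derivative Im (vector_derivative f (at 0))) (at 0)"
    by (rule has_field_derivative_transform_within[where d = e]) (use assms in auto)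
  then show ?thesis
    using DERIV_const DERIV_unique by blast
qed

lemma mixed_difference_mean_value:
  fixes f fx fxy :: "real \<Rightarrow> real \<Rightarrow> real"
  assumes "s > 0"
    and dx: "\<And>x y. 0 \<le> x \<Longrightarrow> x \<le> s \<Longrightarrow> 0 \<le> y \<Longrightarrow> y \<le> s \<Longrightarrow> ((\<lambda>x. f x y) has_real_derivative fx x y) (at x)"
    and dy: "\<And>x y. 0 \<le> x \<Longrightarrow> x \<le> s \<Longrightarrow> 0 \<le> y \<Longrightarrow> y \<le> s \<Longrightarrow> ((\<lambda>y. fx x y) has_real_derivative fxy x y) (at y)"
  shows "\<exists>\<xi> \<eta>. 0 < \<xi> \<and> \<xi> < s \<and> 0 < \<eta> \<and> \<eta> < s \<and> f s s - f 0 s - f s 0 + f 0 0 = s\<^sup>2 * fxy \<xi> \<eta>"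
proof -
  have "\<exists>\<xi>. 0 < \<xi> \<and> \<xi> < s \<and> (f s s - f s 0) - (f 0 s - f 0 0) = (s - 0) * (fx \<xi> s - fx \<xi> 0)"
    by (rule MVT2[OF \<open>s > 0\<close>]) (use \<open>s > 0\<close> in \<open>auto intro!: DERIV_diff dx\<close>)
  then obtain \<xi> where \<xi>: "0 < \<xi>" "\<xi> < s"
    and "(f s s - f s 0) - (f 0 s - f 0 0) = (s - 0) * (fx \<xi> s - fx \<xi> 0)"
    by blast
  moreover have "\<exists>\<eta>. 0 < \<eta> \<and> \<eta> < s \<and> fx \<xi> s - fx \<xi> 0 = (s - 0) * fxy \<xi> \<eta>"
    by (rule MVT2[OF \<open>s > 0\<close>]) (use \<xi> in \<open>auto intro!: dy\<close>)
  then obtain \<eta> where "0 < \<eta>" "\<eta> < s" and "fx \<xi> s - fx \<xi> 0 = (s - 0) * fxy \<xi> \<eta>"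
    by blast
  ultimately show ?thesis
    by (intro exI[of _ \<xi>] exI[of _ \<eta>]) (simp add: power2_eq_square algebra_simps)
qed

lemma mixed_partial_eqI:
  fixes f fx fxy :: "real \<Rightarrow> real \<Rightarrow> real"
  assumes "e > 0"
    and dx: "\<And>x y. 0 \<le> x \<Longrightarrow> x < e \<Longrightarrow> 0 \<le> y \<Longrightarrow> y < e \<Longrightarrow> ((\<lambda>x. f x y) has_real_derivative fx x y) (at x)"
    and dy: "\<And>x y. 0 \<le> x \<Longrightarrow> x < e \<Longrightarrow> 0 \<le> y \<Longrightarrow> y < e \<Longrightarrow> ((\<lambda>y. fx x y) has_real_derivative fxy x y) (at y)"
    and cont: "\<And>\<epsilon>. \<epsilon> > 0 \<Longrightarrow> \<exists>\<eta>>0. \<forall>x y. 0 \<le> x \<longrightarrow> x < \<eta> \<longrightarrow> 0 \<le> y \<longrightarrow> y < \<eta> \<longrightarrow> \<bar>fxy x y - fxy 0 0\<bar> < \<epsilon>"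
    and taylor: "\<And>s. 0 < s \<Longrightarrow> s < e \<Longrightarrow> \<bar>f s s - f 0 s - f s 0 + f 0 0 - Q * s\<^sup>2\<bar> \<le> C * s ^ 3"
  shows "fxy 0 0 = Q"
proof (rule ccontr)
  assume "fxy 0 0 \<noteq> Q"
  define g where "g = \<bar>fxy 0 0 - Q\<bar>"
  have "g > 0" using \<open>fxy 0 0 \<noteq> Q\<close> by (simp add: g_def)
  then obtain \<eta> where "\<eta> > 0"
    and near: "\<And>x y. 0 \<le> x \<Longrightarrow> x < \<eta> \<Longrightarrow> 0 \<le> y \<Longrightarrow> y < \<eta> \<Longrightarrow> \<bar>fxy x y - fxy 0 0\<bar> < g / 2"
    using cont[of "g / 2"] by auto
  define s where "s = min (e / 2) (min (\<eta> / 2) (g / (2 * (\<bar>C\<bar> + 1))))"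
  have s: "0 < s" "s < e" "s < \<eta>" "2 * \<bar>C\<bar> * s < g"
  proof -
    have "2 * \<bar>C\<bar> * s \<le> 2 * \<bar>C\<bar> * (g / (2 * (\<bar>C\<bar> + 1)))"
      by (intro mult_left_mono) (auto simp: s_def)
    also have "\<dots> < g"
      using \<open>g > 0\<close> by (simp add: field_simps)
    finally show "2 * \<bar>C\<bar> * s < g" .
  qed (use \<open>e > 0\<close> \<open>\<eta> > 0\<close> \<open>g > 0\<close> in \<open>auto simp: s_def\<close>)
  obtain \<xi> \<zeta> where \<xi>\<zeta>: "0 < \<xi>" "\<xi> < s" "0 < \<zeta>" "\<zeta> < s"
    and mvt: "f s s - f 0 s - f s 0 + f 0 0 = s\<^sup>2 * fxy \<xi> \<zeta>"
    using mixed_difference_mean_value[of s f fx fxy] s dx dy by force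
  have "s\<^sup>2 * \<bar>fxy \<xi> \<zeta> - Q\<bar> \<le> C * s ^ 3"
  proof -
    have "s\<^sup>2 * fxy \<xi> \<zeta> - Q * s\<^sup>2 = s\<^sup>2 * (fxy \<xi> \<zeta> - Q)"
      by (simp add: algebra_simps)
    then show ?thesis
      using taylor[OF s(1,2)] unfolding mvt by (simp add: abs_mult)
  qed
  then have "\<bar>fxy \<xi> \<zeta> - Q\<bar> \<le> \<bar>C\<bar> * s"
    using s(1) by (simp add: power2_eq_square power3_eq_cube mult.assoc)
      (smt (verit) abs_ge_self mult_le_cancel_left_pos mult_right_mono zero_less_mult_iff)
  moreover have "\<bar>fxy \<xi> \<zeta> - fxy 0 0\<bar> < g / 2"
    using near \<xi>\<zeta> s by auto
  ultimately show False
    using s(4) unfolding g_def by argo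
qed

lemma line_line_same: "line d (line d W s) t = line d W (s + t)"
  by (auto simp: line_def fun_eq_iff algebra_simps)

lemma line_line_commute: "line d (line d' W s) t = line d' (line d W t) s"
  by (auto simp: line_def fun_eq_iff algebra_simps)

lemma line_0 [simp]: "line d W 0 = W"
  by (auto simp: line_def fun_eq_iff)

lemma line_in_cslice: "d \<in> dirs n \<Longrightarrow> W \<in> cslice n \<Longrightarrow> line d W t \<in> cslice n"
  by (auto simp: line_def cslice_def dirs_def)

lemma cnorm_nonneg: "cnorm n W \<ge> 0"
  unfolding cnorm_def by (intro real_sqrt_ge_zero sum_nonneg) auto

lemma cnorm_zero [simp]: "cnorm n (\<lambda>_. 0) = 0"
  by (simp add: cnorm_def)

lemma cnorm_line_le:
  assumes "d \<in> dirs n"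
  shows "cnorm n (line d W t) \<le> cnorm n W + \<bar>t\<bar>"
proof -
  define e where "e j = (if j = fst d then \<bar>t\<bar> else 0)" for j
  have L2: "cnorm n V = L2_set (\<lambda>j. cmod (V j)) {1..n+1}" for V
    by (simp add: cnorm_def L2_set_def)
  have "cnorm n (line d W t) \<le> L2_set (\<lambda>j. cmod (W j) + e j) {1..n+1}"
    unfolding L2 by (rule L2_set_mono)
      (auto simp: line_def e_def norm_mult intro: order_trans[OF norm_triangle_ineq])
  also have "\<dots> \<le> L2_set (\<lambda>j. cmod (W j)) {1..n+1} + L2_set e {1..n+1}"
    by (rule L2_set_triangle_ineq)
  also have "L2_set e {1..n+1} = \<bar>t\<bar>"
    using assms by (auto simp: L2_set_def e_def dirs_def if_distrib[of power2] cong: if_cong)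
  finally show ?thesis
    unfolding L2 .
qed

definition quadric :: "nat \<Rightarrow> (nat \<Rightarrow> complex) \<Rightarrow> real" where
  "quadric n W = - Im (W (n+1)) + (\<Sum>j=1..n-1. (cmod (W j))\<^sup>2)"

lemma quadric_point:
  "quadric n ((\<lambda>_. 0)(j := w)) = (if j = n+1 then - Im w else 0) + (if j \<in> {1..n-1} then (cmod w)\<^sup>2 else 0)"
  unfolding quadric_def by (simp add: if_distrib[of "\<lambda>x. (cmod x)\<^sup>2"] cong: if_cong)

lemma quadric_two_points:
  assumes "j \<noteq> j'"
  shows "quadric n ((\<lambda>_. 0)(j := w, j' := w')) = quadric n ((\<lambda>_. 0)(j := w)) + quadric n ((\<lambda>_. 0)(j' := w'))"
proof -
  have "(cmod (((\<lambda>_. 0)(j := w, j' := w')) i))\<^sup>2 = (cmod (((\<lambda>_. 0)(j := w)) i))\<^sup>2 + (cmod (((\<lambda>_. 0)(j' := w')) i))\<^sup>2" for i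
    using assms by auto
  then show ?thesis
    using assms unfolding quadric_def by (simp add: sum.distrib)
qed

definition plane :: "nat \<times> bool \<Rightarrow> nat \<times> bool \<Rightarrow> real \<Rightarrow> real \<Rightarrow> nat \<Rightarrow> complex" where
  "plane a b x y = line a (line b (\<lambda>_. 0) y) x"

lemma plane_in_cslice: "a \<in> dirs n \<Longrightarrow> b \<in> dirs n \<Longrightarrow> plane a b x y \<in> cslice n"
  unfolding plane_def by (intro line_in_cslice) (auto simp: cslice_def)

lemma cnorm_plane_le: "a \<in> dirs n \<Longrightarrow> b \<in> dirs n \<Longrightarrow> cnorm n (plane a b x y) \<le> \<bar>x\<bar> + \<bar>y\<bar>"
  using cnorm_line_le[of a n "line b (\<lambda>_. 0) y" x] cnorm_line_le[of b n "\<lambda>_. 0" y]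
  unfolding plane_def by simp

lemma plane_0_0 [simp]: "plane a b 0 0 = (\<lambda>_. 0)"
  by (simp add: plane_def)

lemma line_plane_fst: "line a (plane a b x y) t = plane a b (t + x) y"
  by (simp add: plane_def line_line_same add.commute)

lemma line_plane_snd: "line b (plane a b x y) t = plane a b x (t + y)"
  by (simp add: plane_def line_line_commute[of b a] line_line_same add.commute)

lemma quadric_plane_mixed_difference:
  "quadric n (plane a b s s) - quadric n (plane a b 0 s) - quadric n (plane a b s 0) + quadric n (plane a b 0 0)
    = (if a = b \<and> fst a \<in> {1..n-1} then 2 else 0) * s\<^sup>2"
proof -
  obtain ja sa jb sb where ab: "a = (ja, sa)" "b = (jb, sb)"
    by (cases a, cases b)
  define ca :: complex where "ca = (if sa then \<i> else 1)"
  define cb :: complex where "cb = (if sb then \<i> else 1)"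
  show ?thesis
  proof (cases "ja = jb")
    case True
    then have P: "plane a b x y = (\<lambda>_. 0)(ja := cb * of_real y + ca * of_real x)" for x y
      by (auto simp: plane_def line_def fun_eq_iff ab ca_def cb_def)
    show ?thesis
      unfolding P quadric_point using True
      by (cases sa; cases sb) (auto simp: ab ca_def cb_def cmod_power2 algebra_simps)
  next
    case False
    then have P: "plane a b x y = (\<lambda>_. 0)(jb := cb * of_real y, ja := ca * of_real x)" for x y
      by (auto simp: plane_def line_def fun_eq_iff ab ca_def cb_def)
    show ?thesis
      unfolding P using False by (simp add: quadric_two_points quadric_point ab)
  qed
qed

lemma pdir_dw:
  assumes "(\<lambda>t. pdir (m, False) f (line d W t)) differentiable (at 0)"
    and "(\<lambda>t. pdir (m, True) f (line d W t)) differentiable (at 0)"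
  shows "pdir d (dw f m) W = (pdir d (pdir (m, False) f) W - \<i> * pdir d (pdir (m, True) f) W) / 2"
  unfolding pdir_def[of d] dw_def using assms
  by (intro vector_derivative_at has_vector_derivative_divide has_vector_derivative_diff
      has_vector_derivative_mult_right) (simp_all add: vector_derivative_works)

locale normal_form_hypersurface =
  fixes n :: nat and \<rho> \<phi> :: "(nat \<Rightarrow> complex) \<Rightarrow> real" and \<delta> K :: real
  assumes \<delta>_pos: "\<delta> > 0" and K_nonneg: "K \<ge> 0"
    and smooth: "\<And>ds W. set ds \<subseteq> dirs n \<Longrightarrow> W \<in> cslice n \<Longrightarrow> cnorm n W < \<delta> \<Longrightarrow>
      (\<forall>d\<in>dirs n. (\<lambda>t. pdirs ds (\<lambda>W. complex_of_real (\<rho> W)) (line d W t)) differentiable (at 0))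
      \<and> cont_slice n (pdirs ds (\<lambda>W. complex_of_real (\<rho> W))) W"
    and normal_form: "\<And>W. W \<in> cslice n \<Longrightarrow> cnorm n W < \<delta> \<Longrightarrow> \<rho> W = quadric n W + \<phi> W"
    and remainder_cubic: "\<And>W. W \<in> cslice n \<Longrightarrow> cnorm n W < \<delta> \<Longrightarrow> \<bar>\<phi> W\<bar> \<le> K * cnorm n W ^ 3"
begin

abbreviation rhoC :: "(nat \<Rightarrow> complex) \<Rightarrow> complex" where
  "rhoC \<equiv> \<lambda>W. complex_of_real (\<rho> W)"

lemma differentiable_rho_line:
  "W \<in> cslice n \<Longrightarrow> cnorm n W < \<delta> \<Longrightarrow> d \<in> dirs n \<Longrightarrow> (\<lambda>t. rhoC (line d W t)) differentiable (at 0)"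
  using smooth[of "[]" W] by simp

lemma differentiable_pdir_rho_line:
  "W \<in> cslice n \<Longrightarrow> cnorm n W < \<delta> \<Longrightarrow> a \<in> dirs n \<Longrightarrow> d \<in> dirs n \<Longrightarrow>
    (\<lambda>t. pdir a rhoC (line d W t)) differentiable (at 0)"
  using smooth[of "[a]" W] by simp

lemma cont_pdir_pdir_rho:
  "W \<in> cslice n \<Longrightarrow> cnorm n W < \<delta> \<Longrightarrow> a \<in> dirs n \<Longrightarrow> b \<in> dirs n \<Longrightarrow> cont_slice n (pdir b (pdir a rhoC)) W"
  using smooth[of "[b, a]" W] by simp

lemma Im_pdir_rho:
  assumes "W \<in> cslice n" "cnorm n W < \<delta>" "a \<in> dirs n"
  shows "Im (pdir a rhoC W) = 0"
  unfolding pdir_def using differentiable_rho_line[OF assms]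
  by (rule Im_vector_derivative_eq_0[where e = 1]) auto

lemma has_real_derivative_rho_line:
  "W \<in> cslice n \<Longrightarrow> cnorm n W < \<delta> \<Longrightarrow> a \<in> dirs n \<Longrightarrow>
    ((\<lambda>t. \<rho> (line a W t)) has_real_derivative Re (pdir a rhoC W)) (at 0)"
  using has_field_derivative_Re[of "\<lambda>t. rhoC (line a W t)"] differentiable_rho_line
  unfolding pdir_def by (simp add: vector_derivative_works)

lemma has_real_derivative_pdir_rho_line:
  "W \<in> cslice n \<Longrightarrow> cnorm n W < \<delta> \<Longrightarrow> a \<in> dirs n \<Longrightarrow> b \<in> dirs n \<Longrightarrow>
    ((\<lambda>t. Re (pdir a rhoC (line b W t))) has_real_derivative Re (pdir b (pdir a rhoC) W)) (at 0)"
  using has_field_derivative_Re[of "\<lambda>t. pdir a rhoC (line b W t)"] differentiable_pdir_rho_line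
  unfolding pdir_def[of b] by (simp add: vector_derivative_works)

lemma phi_origin: "\<phi> (\<lambda>_. 0) = 0"
  using remainder_cubic[of "\<lambda>_. 0"] \<delta>_pos by (simp add: cslice_def)

lemma rho_origin: "\<rho> (\<lambda>_. 0) = 0"
  using normal_form[of "\<lambda>_. 0"] \<delta>_pos by (simp add: cslice_def quadric_def phi_origin)

lemma phi_le_cube:
  assumes "W \<in> cslice n" "cnorm n W \<le> r" "r < \<delta>"
  shows "\<bar>\<phi> W\<bar> \<le> K * r ^ 3"
proof -
  have "\<bar>\<phi> W\<bar> \<le> K * cnorm n W ^ 3"
    using assms by (intro remainder_cubic) auto
  also have "\<dots> \<le> K * r ^ 3"
    using assms(2) by (intro mult_left_mono power_mono cnorm_nonneg K_nonneg)
  finally show ?thesis .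
qed

lemma pdir_rho_origin:
  assumes d: "(j, s) \<in> dirs n"
  shows "pdir (j, s) rhoC (\<lambda>_. 0) = (if j = n+1 \<and> s then -1 else 0)"
  unfolding pdir_def
proof (rule vector_derivative_eqI_quadratic_remainder[where e = "min \<delta> 1" and K = "1 + K"])
  fix t :: real
  assume t: "\<bar>t\<bar> < min \<delta> 1"
  define W where "W = line (j, s) (\<lambda>_. 0) t"
  have W: "W \<in> cslice n" "cnorm n W \<le> \<bar>t\<bar>"
    unfolding W_def using line_in_cslice[OF d] cnorm_line_le[OF d, of "\<lambda>_. 0" t]
    by (auto simp: cslice_def)
  have "W = (\<lambda>_. 0)(j := (if s then \<i> else 1) * of_real t)"
    by (simp add: W_def line_def)
  then have "\<rho> W - t * (if j = n+1 \<and> s then -1 else 0) = (if j \<in> {1..n-1} then t\<^sup>2 else 0) + \<phi> W"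
    using normal_form[OF W(1)] W(2) t by (auto simp: quadric_point norm_mult)
  moreover have "\<bar>\<phi> W\<bar> \<le> K * t\<^sup>2"
  proof -
    have "\<bar>\<phi> W\<bar> \<le> K * \<bar>t\<bar> ^ 3"
      using W t by (intro phi_le_cube) auto
    also have "\<dots> \<le> K * t\<^sup>2"
    proof (rule mult_left_mono[OF _ K_nonneg])
      have "\<bar>t\<bar> ^ 3 = \<bar>t\<bar> * t\<^sup>2"
        by (simp add: power3_eq_cube power2_eq_square abs_mult_self_eq flip: mult.assoc)
      then show "\<bar>t\<bar> ^ 3 \<le> t\<^sup>2"
        using t by (simp add: mult_left_le_one_le)
    qed
    finally show ?thesis .
  qed
  ultimately have "\<bar>\<rho> W - t * (if j = n+1 \<and> s then -1 else 0)\<bar> \<le> t\<^sup>2 + K * t\<^sup>2"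
    using zero_le_power2[of t] by argo
  then show "cmod (rhoC (line (j, s) (\<lambda>_. 0) t) - rhoC (line (j, s) (\<lambda>_. 0) 0)
      - of_real t * (if j = n+1 \<and> s then -1 else 0)) \<le> (1 + K) * t\<^sup>2"
  proof -
    have "rhoC W - rhoC (\<lambda>_. 0) - of_real t * (if j = n+1 \<and> s then -1 else 0)
        = of_real (\<rho> W - t * (if j = n+1 \<and> s then -1 else 0))"
      by (simp add: rho_origin)
    with \<open>\<bar>\<rho> W - _\<bar> \<le> _\<close> show ?thesis
      by (simp add: W_def[symmetric] distrib_right del: of_real_diff)
  qed
qed (use \<delta>_pos in simp)

lemma rho_plane_mixed_difference:
  assumes a: "a \<in> dirs n" and b: "b \<in> dirs n" and s: "0 < s" "s < \<delta> / 2"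
  shows "\<bar>\<rho> (plane a b s s) - \<rho> (plane a b 0 s) - \<rho> (plane a b s 0) + \<rho> (plane a b 0 0)
    - (if a = b \<and> fst a \<in> {1..n-1} then 2 else 0) * s\<^sup>2\<bar> \<le> 10 * K * s ^ 3"
proof -
  have \<rho>_P: "\<rho> (plane a b x y) = quadric n (plane a b x y) + \<phi> (plane a b x y)"
    and \<phi>_P: "\<bar>\<phi> (plane a b x y)\<bar> \<le> K * (x + y) ^ 3"
    if "0 \<le> x" "x \<le> s" "0 \<le> y" "y \<le> s" for x y
    using that s cnorm_plane_le[OF a b, of x y] by (auto intro!: normal_form plane_in_cslice a b phi_le_cube)
  have "(s + s) ^ 3 = 8 * s ^ 3"
    by (simp add: power3_eq_cube)
  then have "\<bar>\<phi> (plane a b s s) - \<phi> (plane a b 0 s) - \<phi> (plane a b s 0) + \<phi> (plane a b 0 0)\<bar> \<le> 10 * K * s ^ 3"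
    using \<phi>_P[of s s] \<phi>_P[of 0 s] \<phi>_P[of s 0] s phi_origin by simp
  then show ?thesis
    using \<rho>_P[of s s] \<rho>_P[of 0 s] \<rho>_P[of s 0] \<rho>_P[of 0 0] s quadric_plane_mixed_difference[of n a b s]
    by simp
qed

lemma Re_pdir_pdir_rho_origin:
  assumes a: "a \<in> dirs n" and b: "b \<in> dirs n"
  shows "Re (pdir b (pdir a rhoC) (\<lambda>_. 0)) = (if a = b \<and> fst a \<in> {1..n-1} then 2 else 0)"
proof -
  have near: "cnorm n (plane a b x y) < \<delta>" if "\<bar>x\<bar> < \<delta> / 2" "\<bar>y\<bar> < \<delta> / 2" for x y
    using cnorm_plane_le[OF a b, of x y] that by simp
  have "Re (pdir b (pdir a rhoC) (plane a b 0 0)) = (if a = b \<and> fst a \<in> {1..n-1} then 2 else 0)"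
  proof (rule mixed_partial_eqI[where e = "\<delta> / 2" and C = "10 * K"
        and f = "\<lambda>x y. \<rho> (plane a b x y)" and fx = "\<lambda>x y. Re (pdir a rhoC (plane a b x y))"
        and fxy = "\<lambda>x y. Re (pdir b (pdir a rhoC) (plane a b x y))"])
    fix x y :: real
    assume "0 \<le> x" "x < \<delta> / 2" "0 \<le> y" "y < \<delta> / 2"
    then have P: "plane a b x y \<in> cslice n" "cnorm n (plane a b x y) < \<delta>"
      using plane_in_cslice[OF a b] near by auto
    show "((\<lambda>x. \<rho> (plane a b x y)) has_real_derivative Re (pdir a rhoC (plane a b x y))) (at x)"
      using has_real_derivative_rho_line[OF P a] DERIV_shift[of _ _ 0 x] by (simp add: line_plane_fst)
    show "((\<lambda>y. Re (pdir a rhoC (plane a b x y))) has_real_derivative Re (pdir b (pdir a rhoC) (plane a b x y))) (at y)"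
      using has_real_derivative_pdir_rho_line[OF P a b] DERIV_shift[of _ _ 0 y] by (simp add: line_plane_snd)
  next
    fix \<epsilon> :: real
    assume "\<epsilon> > 0"
    then obtain \<eta> where "\<eta> > 0" and cont: "\<And>V. V \<in> cslice n \<Longrightarrow> cnorm n V < \<eta> \<Longrightarrow>
        cmod (pdir b (pdir a rhoC) V - pdir b (pdir a rhoC) (\<lambda>_. 0)) < \<epsilon>"
      using cont_pdir_pdir_rho[OF _ _ a b, of "\<lambda>_. 0"] \<delta>_pos unfolding cont_slice_def by (auto simp: cslice_def)
    have "\<bar>Re (pdir b (pdir a rhoC) (plane a b x y)) - Re (pdir b (pdir a rhoC) (plane a b 0 0))\<bar> < \<epsilon>"
      if "0 \<le> x" "x < \<eta> / 2" "0 \<le> y" "y < \<eta> / 2" for x y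
      using cont[OF plane_in_cslice[OF a b], of x y] cnorm_plane_le[OF a b, of x y] that
        abs_Re_le_cmod[of "pdir b (pdir a rhoC) (plane a b x y) - pdir b (pdir a rhoC) (\<lambda>_. 0)"]
      by simp
    then show "\<exists>\<eta>>0. \<forall>x y. 0 \<le> x \<longrightarrow> x < \<eta> \<longrightarrow> 0 \<le> y \<longrightarrow> y < \<eta> \<longrightarrow>
        \<bar>Re (pdir b (pdir a rhoC) (plane a b x y)) - Re (pdir b (pdir a rhoC) (plane a b 0 0))\<bar> < \<epsilon>"
      using \<open>\<eta> > 0\<close> by (intro exI[of _ "\<eta> / 2"]) auto
  qed (use \<delta>_pos rho_plane_mixed_difference[OF a b] in auto)
  then show ?thesis
    by simp
qed

lemma pdir_pdir_rho_origin:
  assumes a: "a \<in> dirs n" and b: "b \<in> dirs n"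
  shows "pdir b (pdir a rhoC) (\<lambda>_. 0) = (if a = b \<and> fst a \<in> {1..n-1} then 2 else 0)"
proof (rule complex_eqI)
  have origin: "(\<lambda>_. 0) \<in> cslice n" "cnorm n (\<lambda>_. 0) < \<delta>"
    using \<delta>_pos by (auto simp: cslice_def)
  have "Im (pdir b (pdir a rhoC) (\<lambda>_. 0)) = 0"
    unfolding pdir_def[of b]
  proof (rule Im_vector_derivative_eq_0[where e = \<delta>])
    show "(\<lambda>t. pdir a rhoC (line b (\<lambda>_. 0) t)) differentiable (at 0)"
      by (rule differentiable_pdir_rho_line[OF origin a b])
    fix t :: real
    assume "\<bar>t\<bar> < \<delta>"
    then show "Im (pdir a rhoC (line b (\<lambda>_. 0) t)) = 0"
      using cnorm_line_le[OF b, of "\<lambda>_. 0" t] line_in_cslice[OF b origin(1)]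
      by (intro Im_pdir_rho a) auto
  qed (rule \<delta>_pos)
  then show "Im (pdir b (pdir a rhoC) (\<lambda>_. 0)) = Im (if a = b \<and> fst a \<in> {1..n-1} then 2 else 0)"
    by simp
qed (auto simp: Re_pdir_pdir_rho_origin[OF a b])

lemma rho_W_origin: "LrhoW n rhoC [] (\<lambda>_. 0) = (\<lambda>m. if m = n+1 then \<i> / 2 else 0)"
  by (auto simp: LrhoW_def dw_def pdir_rho_origin dirs_def fun_eq_iff)

lemma dwb_rho_origin: "m \<in> {1..n+1} \<Longrightarrow> dwb rhoC m (\<lambda>_. 0) = (if m = n+1 then - \<i> / 2 else 0)"
  by (auto simp: dwb_def pdir_rho_origin dirs_def)

lemma Lam_rho_W_origin:
  assumes "a \<in> {1..n-1}"
  shows "LrhoW n rhoC [a] (\<lambda>_. 0) = (\<lambda>m. if m = a then 1 else 0)"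
proof
  fix m
  have origin: "(\<lambda>_. 0) \<in> cslice n" "cnorm n (\<lambda>_. 0) < \<delta>"
    using \<delta>_pos by (auto simp: cslice_def)
  show "LrhoW n rhoC [a] (\<lambda>_. 0) m = (if m = a then 1 else 0)"
  proof (cases "m \<in> {1..n+1}")
    case True
    then have dirs: "(m, s) \<in> dirs n" "(a, s) \<in> dirs n" for s
      using assms by (auto simp: dirs_def)
    have "dwb (dw rhoC m) a (\<lambda>_. 0) = (if m = a then 1 else 0)"
      unfolding dwb_def
      using assms by (simp add: pdir_dw differentiable_pdir_rho_line[OF origin] dirs pdir_pdir_rho_origin)
    moreover have "dwb rhoC a (\<lambda>_. 0) = 0" "dwb rhoC (n+1) (\<lambda>_. 0) = - \<i> / 2"
      using assms by (auto simp: dwb_rho_origin)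
    ultimately show ?thesis
      using True by (simp add: LrhoW_def Lam_def)
  next
    case False
    then show ?thesis
      using assms by (auto simp: LrhoW_def)
  qed
qed

end

theorem lemma5p1:
  fixes n l :: nat and \<rho> \<phi> :: "(nat \<Rightarrow> complex) \<Rightarrow> real"
  assumes "n \<ge> 2"
    and smooth: "smooth_near0 n (\<lambda>W. complex_of_real (\<rho> W))"
    and form: "\<exists>\<delta>>0. \<forall>W\<in>cslice n. cnorm n W < \<delta> \<longrightarrow>
       \<rho> W = - Im (W (n+1)) + (\<Sum>j=1..n-1. (cmod (W j))^2) + \<phi> W"
    and cubic: "\<exists>C \<delta>. \<delta> > 0 \<and> (\<forall>W\<in>cslice n. cnorm n W < \<delta> \<longrightarrow> \<bar>\<phi> W\<bar> \<le> C * cnorm n W ^ 3)"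
    and "l \<ge> 2"
    and nondeg: "k_nondegenerate n (\<lambda>W. complex_of_real (\<rho> W)) l (\<lambda>_. 0)"
  shows "\<exists>is. length is = l \<and> sorted is \<and> set is \<subseteq> {1..n} \<and>
           Delta n (\<lambda>W. complex_of_real (\<rho> W)) is (\<lambda>_. 0) \<noteq> 0"
proof -
  obtain \<delta>\<^sub>1 \<delta>\<^sub>2 \<delta>\<^sub>3 C where \<delta>: "\<delta>\<^sub>1 > 0" "\<delta>\<^sub>2 > 0" "\<delta>\<^sub>3 > 0"
    and smooth_\<delta>: "\<forall>ds. set ds \<subseteq> dirs n \<longrightarrow> (\<forall>W\<in>cslice n. cnorm n W < \<delta>\<^sub>1 \<longrightarrow>
         (\<forall>d\<in>dirs n. (\<lambda>t. pdirs ds (\<lambda>W. complex_of_real (\<rho> W)) (line d W t)) differentiable (at 0))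
         \<and> cont_slice n (pdirs ds (\<lambda>W. complex_of_real (\<rho> W))) W)"
    and form_\<delta>: "\<forall>W\<in>cslice n. cnorm n W < \<delta>\<^sub>2 \<longrightarrow> \<rho> W = quadric n W + \<phi> W"
    and cubic_\<delta>: "\<forall>W\<in>cslice n. cnorm n W < \<delta>\<^sub>3 \<longrightarrow> \<bar>\<phi> W\<bar> \<le> C * cnorm n W ^ 3"
    using smooth form cubic unfolding smooth_near0_def quadric_def by metis
  interpret normal_form_hypersurface n \<rho> \<phi> "min \<delta>\<^sub>1 (min \<delta>\<^sub>2 \<delta>\<^sub>3)" "\<bar>C\<bar>"
  proof
    fix W assume W: "W \<in> cslice n" "cnorm n W < min \<delta>\<^sub>1 (min \<delta>\<^sub>2 \<delta>\<^sub>3)"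
    have "\<bar>\<phi> W\<bar> \<le> C * cnorm n W ^ 3"
      using cubic_\<delta> W by simp
    also have "\<dots> \<le> \<bar>C\<bar> * cnorm n W ^ 3"
      by (intro mult_right_mono) (auto simp: cnorm_nonneg)
    finally show "\<bar>\<phi> W\<bar> \<le> \<bar>C\<bar> * cnorm n W ^ 3" .
  qed (use \<delta> smooth_\<delta> form_\<delta> in auto)
  show ?thesis
    using \<open>n \<ge> 2\<close> \<open>l \<ge> 2\<close> nondeg rho_W_origin Lam_rho_W_origin
    by (intro Delta_ne_0_if_nondegenerate[where c = "\<i> / 2"]) auto
qed

end
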